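(* Let $n\ge 3$ and let $c=(c_1,\dots,c_n)\in\{-1,+1\}^n$ be such that the cyclic sequence $(c_1,\dots,c_n,-c_1,\dots,-c_n)$ of length $2n$ contains no $n-1$ cyclically consecutive equal entries. Set $\varphi_1=0$, $\varphi_{n+1}=\pi$, and for $\varphi=(\varphi_2,\dots,\varphi_n)\in\mathbb{R}^{n-1}$, $y=(y_1,y_2)\in\mathbb{R}^2$ define \[ f(\varphi)=-\sum_{j=1}^{n}2\sin\frac{\varphi_{j+1}-\varphi_j}{2},\quad g_1(\varphi)=\sum_{j=2}^{n}(c_{j-1}-c_j)\cos\varphi_j-(c_1+c_n),\quad g_2(\varphi)=\sum_{j=2}^{n}(c_{j-1}-c_j)\sin\varphi_j, \] $L(\varphi,y)=f(\varphi)+y_1g_1(\varphi)+y_2g_2(\varphi)$, let $H(\varphi,y)$ be the Hessian of $L$ with respect to $(\varphi_2,\dots,\varphi_n)$, let $C(\varphi)$ be the $2\times(n-1)$ Jacobian of $(g_1,g_2)$ with respect to $(\varphi_2,\dots,\varphi_n)$, and let \[ K(\varphi,y)=\begin{pmatrix}H(\varphi,y)& C(\varphi)^T\\ C(\varphi)&0\end{pmatrix}. \] Let $w^\ast=(\varphi^\ast,0)$ with $\varphi^\ast_j=(j-1)\pi/n$ for $j=2,\dots,n$. Then $K$ is invertible at every point of some neighborhood of $w^\ast$ in $\mathbb{R}^{n-1}\times\mathbb{R}^2$. *)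

theory Defs
  imports Complex_Main "HOL-Analysis.Derivative" "Jordan_Normal_Form.Matrix" "Jordan_Normal_Form.Determinant"
begin

text \<open>Points phi = (phi_2,...,phi_n) are functions nat => real; only indices 2..n are used.
  Partial derivative with respect to coordinate i.\<close>
definition pd :: "nat \<Rightarrow> ((nat \<Rightarrow> real) \<Rightarrow> real) \<Rightarrow> (nat \<Rightarrow> real) \<Rightarrow> real" where
  "pd i F x = deriv (\<lambda>t. F (x(i := t))) (x i)"

definition ang :: "nat \<Rightarrow> (nat \<Rightarrow> real) \<Rightarrow> nat \<Rightarrow> real" where
  "ang n phi j = (if j = 1 then 0 else if j = n + 1 then pi else phi j)"

definition fobj :: "nat \<Rightarrow> (nat \<Rightarrow> real) \<Rightarrow> real" where
  "fobj n phi = - (\<Sum>j=1..n. 2 * sin ((ang n phi (Suc j) - ang n phi j) / 2))"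

definition g1 :: "nat \<Rightarrow> (nat \<Rightarrow> real) \<Rightarrow> (nat \<Rightarrow> real) \<Rightarrow> real" where
  "g1 n c phi = (\<Sum>j=2..n. (c (j - 1) - c j) * cos (phi j)) - (c 1 + c n)"

definition g2 :: "nat \<Rightarrow> (nat \<Rightarrow> real) \<Rightarrow> (nat \<Rightarrow> real) \<Rightarrow> real" where
  "g2 n c phi = (\<Sum>j=2..n. (c (j - 1) - c j) * sin (phi j))"

definition Lag :: "nat \<Rightarrow> (nat \<Rightarrow> real) \<Rightarrow> real \<times> real \<Rightarrow> (nat \<Rightarrow> real) \<Rightarrow> real" where
  "Lag n c y phi = fobj n phi + fst y * g1 n c phi + snd y * g2 n c phi"

text \<open>The KKT matrix K = [[H, C^T],[C, 0]], of size (n+1)x(n+1).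
  Row/column index k < n-1 corresponds to variable phi_(k+2); index n-1 to g1, index n to g2.\<close>
definition KKT :: "nat \<Rightarrow> (nat \<Rightarrow> real) \<Rightarrow> (nat \<Rightarrow> real) \<Rightarrow> real \<times> real \<Rightarrow> real mat" where
  "KKT n c phi y = mat (n + 1) (n + 1) (\<lambda>(i, j).
     if i < n - 1 \<and> j < n - 1 then pd (i + 2) (pd (j + 2) (Lag n c y)) phi
     else if i < n - 1 \<and> j = n - 1 then pd (i + 2) (g1 n c) phi
     else if i < n - 1 \<and> j = n then pd (i + 2) (g2 n c) phi
     else if i = n - 1 \<and> j < n - 1 then pd (j + 2) (g1 n c) phi
     else if i = n \<and> j < n - 1 then pd (j + 2) (g2 n c) phi
     else 0)"

definition cycseq :: "nat \<Rightarrow> (nat \<Rightarrow> real) \<Rightarrow> nat \<Rightarrow> real" where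
  "cycseq n c k = (if k < n then c (k + 1) else - c (k - n + 1))"

definition no_long_run :: "nat \<Rightarrow> (nat \<Rightarrow> real) \<Rightarrow> bool" where
  "no_long_run n c = (\<not> (\<exists>i < 2 * n. \<forall>t < n - 1.
      cycseq n c ((i + t) mod (2 * n)) = cycseq n c i))"

definition phistar :: "nat \<Rightarrow> nat \<Rightarrow> real" where
  "phistar n j = (real j - 1) * pi / real n"

end

theory Submission
  imports Defs
begin

text \<open>Let \<open>v = (u, \<lambda>)\<close> lie in the kernel of \<open>K\<close>. The last two rows say \<open>C u = 0\<close>, so the
  first rows give \<open>u\<^sup>T H u = 0\<close>. With \<open>u\<^sub>1 = u\<^sub>n\<^sub>+\<^sub>1 = 0\<close> and
  \<open>s\<^sub>j = sin ((\<phi>\<^sub>j\<^sub>+\<^sub>1 - \<phi>\<^sub>j) / 2)\<close>, summation by parts turns \<open>u\<^sup>T H u\<close> into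
  \<open>\<Sum> s\<^sub>j (u\<^sub>j\<^sub>+\<^sub>1 - u\<^sub>j)\<^sup>2 / 2\<close> minus a diagonal term of size \<open>O(|y|)\<close>. Near \<open>w\<^sup>*\<close>
  every \<open>s\<^sub>j\<close> is at least \<open>sin (\<pi> / 4n)\<close>, and a discrete Poincare inequality lets the
  Dirichlet form dominate the diagonal term, so \<open>u = 0\<close>. Then \<open>C\<^sup>T \<lambda> = 0\<close>. Column \<open>j\<close> of
  \<open>C\<close> is \<open>(c\<^sub>j\<^sub>-\<^sub>1 - c\<^sub>j) (-sin \<phi>\<^sub>j, cos \<phi>\<^sub>j)\<close>, and the sign sequence changes at
  two indices \<open>p < q\<close> (a single change would give a run of \<open>n\<close> equal entries in the
  cyclic sequence); as \<open>0 < \<phi>\<^sub>q - \<phi>\<^sub>p < \<pi>\<close>, those two columns are independent and \<open>\<lambda> = 0\<close>.\<close>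

definition jump :: "(nat \<Rightarrow> real) \<Rightarrow> nat \<Rightarrow> real" where
  "jump c j = c (j - 1) - c j"

definition half_gap_sin :: "nat \<Rightarrow> (nat \<Rightarrow> real) \<Rightarrow> nat \<Rightarrow> real" where
  "half_gap_sin n phi j = sin ((ang n phi (Suc j) - ang n phi j) / 2)"

text \<open>Minus the (diagonal) Hessian of \<open>y\<^sub>1 g\<^sub>1 + y\<^sub>2 g\<^sub>2\<close> at \<open>\<phi>\<^sub>j\<close>.\<close>
definition multiplier_curvature :: "(nat \<Rightarrow> real) \<Rightarrow> real \<times> real \<Rightarrow> (nat \<Rightarrow> real) \<Rightarrow> nat \<Rightarrow> real" where
  "multiplier_curvature c y phi j = jump c j * (fst y * cos (phi j) + snd y * sin (phi j))"

subsection \<open>Partial derivatives\<close>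

lemma pd_eqI: "((\<lambda>t. F (x(i := t))) has_real_derivative D) (at (x i)) \<Longrightarrow> pd i F x = D"
  by (simp add: pd_def DERIV_imp_deriv)

lemma has_real_derivative_fun_upd:
  "((\<lambda>t. (x(i := t)) j) has_real_derivative (if j = i then 1 else 0)) (at t0)"
  by (cases "j = i") (auto intro!: derivative_eq_intros)

lemma ang_fun_upd: "2 \<le> i \<Longrightarrow> i \<le> n \<Longrightarrow> ang n (x(i := t)) j = (if j = i then t else ang n x j)"
  by (auto simp: ang_def)

lemma has_real_derivative_ang_diff:
  assumes "2 \<le> i" "i \<le> n"
  shows "((\<lambda>t. (ang n (x(i := t)) p - ang n (x(i := t)) q) / 2) has_real_derivative
           (((if p = i then 1 else 0) - (if q = i then 1 else 0)) / 2)) (at t0)"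
proof -
  have "((\<lambda>t. ang n (x(i := t)) j) has_real_derivative (if j = i then 1 else 0)) (at t0)" for j
    using assms by (cases "j = i") (auto simp: ang_fun_upd intro!: derivative_eq_intros)
  then show ?thesis by (intro DERIV_cdivide DERIV_diff)
qed

lemma sum_shift_delta:
  assumes "2 \<le> i" "i \<le> Suc n"
  shows "(\<Sum>j=1..n. if Suc j = i then h j else 0) = (h (i - 1) :: real)"
proof -
  have "(\<Sum>j=1..n. if Suc j = i then h j else 0) = (\<Sum>j=1..n. if j = i - 1 then h j else 0)"
    using assms by (intro sum.cong) auto
  also have "\<dots> = h (i - 1)"
    using assms by (subst sum.delta) auto
  finally show ?thesis .
qed

lemma has_real_derivative_g1:
  assumes "2 \<le> i" "i \<le> n"
  shows "((\<lambda>t. g1 n c (x(i := t))) has_real_derivative - jump c i * sin (x i)) (at (x i))"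
proof -
  have "((\<lambda>t. g1 n c (x(i := t))) has_real_derivative
     (\<Sum>j=2..n. (c (j - 1) - c j) * (- sin ((x(i := x i)) j) * (if j = i then 1 else 0))) - 0) (at (x i))"
    unfolding g1_def
    by (intro DERIV_diff DERIV_sum DERIV_cmult DERIV_fun_cos has_real_derivative_fun_upd DERIV_const)
  also have "(\<Sum>j=2..n. (c (j - 1) - c j) * (- sin ((x(i := x i)) j) * (if j = i then 1 else 0))) - 0
     = (\<Sum>j=2..n. if j = i then (c (j - 1) - c j) * (- sin (x j)) else 0)"
    unfolding diff_0_right by (intro sum.cong) auto
  also have "\<dots> = - jump c i * sin (x i)"
    using assms by (simp add: sum.delta' jump_def algebra_simps)
  finally show ?thesis .
qed

lemma has_real_derivative_g2:
  assumes "2 \<le> i" "i \<le> n"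
  shows "((\<lambda>t. g2 n c (x(i := t))) has_real_derivative jump c i * cos (x i)) (at (x i))"
proof -
  have "((\<lambda>t. g2 n c (x(i := t))) has_real_derivative
     (\<Sum>j=2..n. (c (j - 1) - c j) * (cos ((x(i := x i)) j) * (if j = i then 1 else 0)))) (at (x i))"
    unfolding g2_def by (intro DERIV_sum DERIV_cmult DERIV_fun_sin has_real_derivative_fun_upd)
  also have "(\<Sum>j=2..n. (c (j - 1) - c j) * (cos ((x(i := x i)) j) * (if j = i then 1 else 0)))
     = (\<Sum>j=2..n. if j = i then (c (j - 1) - c j) * cos (x j) else 0)"
    by (intro sum.cong) auto
  also have "\<dots> = jump c i * cos (x i)"
    using assms by (simp add: sum.delta' jump_def)
  finally show ?thesis .
qed

lemma has_real_derivative_fobj: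
  assumes "2 \<le> i" "i \<le> n"
  shows "((\<lambda>t. fobj n (x(i := t))) has_real_derivative
           cos ((ang n x (Suc i) - ang n x i) / 2) - cos ((ang n x i - ang n x (i - 1)) / 2)) (at (x i))"
proof -
  let ?cs = "\<lambda>j. cos ((ang n x (Suc j) - ang n x j) / 2)"
  have "((\<lambda>t. fobj n (x(i := t))) has_real_derivative
     - (\<Sum>j=1..n. 2 * (cos ((ang n (x(i := x i)) (Suc j) - ang n (x(i := x i)) j) / 2) *
          (((if Suc j = i then 1 else 0) - (if j = i then 1 else 0)) / 2)))) (at (x i))"
    unfolding fobj_def using assms
    by (intro DERIV_minus DERIV_sum DERIV_cmult DERIV_fun_sin has_real_derivative_ang_diff)
  also have "- (\<Sum>j=1..n. 2 * (cos ((ang n (x(i := x i)) (Suc j) - ang n (x(i := x i)) j) / 2) *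
          (((if Suc j = i then 1 else 0) - (if j = i then 1 else 0)) / 2)))
     = (\<Sum>j=1..n. if j = i then ?cs j else 0) - (\<Sum>j=1..n. if Suc j = i then ?cs j else 0)"
    unfolding sum_subtractf[symmetric] sum_negf[symmetric] by (intro sum.cong) auto
  also have "\<dots> = ?cs i - ?cs (i - 1)"
    using assms sum_shift_delta[of i n ?cs] by (simp add: sum.delta')
  also have "?cs (i - 1) = cos ((ang n x i - ang n x (i - 1)) / 2)"
    using assms by simp
  finally show ?thesis .
qed

lemma pd_g1: "2 \<le> i \<Longrightarrow> i \<le> n \<Longrightarrow> pd i (g1 n c) x = - jump c i * sin (x i)"
  by (rule pd_eqI, rule has_real_derivative_g1)

lemma pd_g2: "2 \<le> i \<Longrightarrow> i \<le> n \<Longrightarrow> pd i (g2 n c) x = jump c i * cos (x i)"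
  by (rule pd_eqI, rule has_real_derivative_g2)

lemma pd_Lag:
  assumes "2 \<le> i" "i \<le> n"
  shows "pd i (Lag n c y) = (\<lambda>x. cos ((ang n x (Suc i) - ang n x i) / 2)
    - cos ((ang n x i - ang n x (i - 1)) / 2) - fst y * jump c i * sin (x i) + snd y * jump c i * cos (x i))"
proof
  fix x
  have "((\<lambda>t. Lag n c y (x(i := t))) has_real_derivative
     (cos ((ang n x (Suc i) - ang n x i) / 2) - cos ((ang n x i - ang n x (i - 1)) / 2))
     + fst y * (- jump c i * sin (x i)) + snd y * (jump c i * cos (x i))) (at (x i))"
    unfolding Lag_def using assms
    by (intro DERIV_add DERIV_cmult has_real_derivative_fobj has_real_derivative_g1 has_real_derivative_g2)
  then show "pd i (Lag n c y) x = cos ((ang n x (Suc i) - ang n x i) / 2)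
    - cos ((ang n x i - ang n x (i - 1)) / 2) - fst y * jump c i * sin (x i) + snd y * jump c i * cos (x i)"
    by (rule pd_eqI[THEN trans]) (simp add: algebra_simps)
qed

lemma pd_pd_Lag:
  assumes "2 \<le> i" "i \<le> n" "2 \<le> k" "k \<le> n"
  shows "pd k (pd i (Lag n c y)) x =
    (half_gap_sin n x i * (of_bool (k = i) - of_bool (k = Suc i))
     + half_gap_sin n x (i - 1) * (of_bool (k = i) - of_bool (k = i - 1))) / 2
    - multiplier_curvature c y x i * of_bool (k = i)"
proof -
  have "((\<lambda>t. pd i (Lag n c y) (x(k := t))) has_real_derivative
      (- sin ((ang n (x(k := x k)) (Suc i) - ang n (x(k := x k)) i) / 2)
          * (((if Suc i = k then 1 else 0) - (if i = k then 1 else 0)) / 2))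
      - (- sin ((ang n (x(k := x k)) i - ang n (x(k := x k)) (i - 1)) / 2)
          * (((if i = k then 1 else 0) - (if i - 1 = k then 1 else 0)) / 2))
      - fst y * jump c i * (cos ((x(k := x k)) i) * (if i = k then 1 else 0))
      + snd y * jump c i * (- sin ((x(k := x k)) i) * (if i = k then 1 else 0))) (at (x k))"
    unfolding pd_Lag[OF assms(1,2)] using assms
    by (intro DERIV_add DERIV_diff DERIV_cmult DERIV_fun_sin DERIV_fun_cos
        has_real_derivative_ang_diff has_real_derivative_fun_upd)
  moreover have "Suc (i - 1) = i" using assms by simp
  ultimately show ?thesis
    by (intro pd_eqI[THEN trans])
      (auto simp: half_gap_sin_def multiplier_curvature_def of_bool_def algebra_simps)
qed

lemma sum_mult_of_bool_eq:
  assumes "\<forall>m. m \<notin> A \<longrightarrow> u m = 0" "finite A"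
  shows "(\<Sum>k\<in>A. u k * of_bool (k = p)) = (u p :: real)"
proof -
  have "(\<Sum>k\<in>A. u k * of_bool (k = p)) = (\<Sum>k\<in>A. if p = k then u k else 0)"
    by (intro sum.cong) auto
  then show ?thesis using assms by (auto simp: sum.delta)
qed

lemma sum_mult_pd_pd_Lag:
  assumes "\<forall>m. m \<notin> {2..n} \<longrightarrow> u m = 0" "2 \<le> i" "i \<le> n"
  shows "(\<Sum>k=2..n. u k * pd k (pd i (Lag n c y)) x) =
    (half_gap_sin n x i * (u i - u (Suc i)) + half_gap_sin n x (i - 1) * (u i - u (i - 1))) / 2
    - multiplier_curvature c y x i * u i"
proof -
  let ?s = "half_gap_sin n x" and ?b = "multiplier_curvature c y x"
  let ?\<delta> = "\<lambda>p. \<Sum>k=2..n. u k * of_bool (k = p)"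
  have "(\<Sum>k=2..n. u k * pd k (pd i (Lag n c y)) x) = (\<Sum>k=2..n.
       ?s i / 2 * (u k * of_bool (k = i)) - ?s i / 2 * (u k * of_bool (k = Suc i))
     + ?s (i - 1) / 2 * (u k * of_bool (k = i)) - ?s (i - 1) / 2 * (u k * of_bool (k = i - 1))
     - ?b i * (u k * of_bool (k = i)))"
    using assms by (intro sum.cong refl) (simp add: pd_pd_Lag field_simps)
  also have "\<dots> = ?s i / 2 * ?\<delta> i - ?s i / 2 * ?\<delta> (Suc i)
     + ?s (i - 1) / 2 * ?\<delta> i - ?s (i - 1) / 2 * ?\<delta> (i - 1) - ?b i * ?\<delta> i"
    by (simp only: sum.distrib sum_subtractf sum_distrib_left)
  also have "\<dots> = (?s i * (u i - u (Suc i)) + ?s (i - 1) * (u i - u (i - 1))) / 2 - ?b i * u i"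
    using sum_mult_of_bool_eq[OF assms(1)] by (simp add: field_simps)
  finally show ?thesis .
qed

subsection \<open>The Dirichlet form\<close>

lemma sum_by_parts_Dirichlet:
  fixes u s :: "nat \<Rightarrow> real"
  assumes "u 1 = 0" "1 \<le> N"
  shows "(\<Sum>k=2..N. u k * (s k * (u k - u (Suc k)) + s (k - 1) * (u k - u (k - 1))))
    = (\<Sum>j=1..N. s j * (u (Suc j) - u j)\<^sup>2) - s N * u (Suc N) * (u (Suc N) - u N)"
  using assms(2)
proof (induction N rule: dec_induct)
  case base
  then show ?case using assms(1) by (simp add: power2_eq_square algebra_simps)
next
  case (step N)
  have "{2..Suc N} = insert (Suc N) {2..N}" "{1..Suc N} = insert (Suc N) {1..N}"
    using step by auto
  then show ?case using step by (simp add: power2_eq_square algebra_simps)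
qed

lemma discrete_Poincare:
  fixes u :: "nat \<Rightarrow> real"
  assumes "u 1 = 0" "1 \<le> k" "k \<le> Suc n"
  shows "(u k)\<^sup>2 \<le> real n * (\<Sum>j=1..n. (u (Suc j) - u j)\<^sup>2)"
proof -
  have "u k = (\<Sum>j=1..k - 1. u (Suc j) - u j)"
    using assms by (subst sum_Suc_diff) auto
  then have "(u k)\<^sup>2 \<le> (\<Sum>j=1..k - 1. (u (Suc j) - u j)\<^sup>2) * real (k - 1)"
    using sum_squared_le_sum_of_squares[of "\<lambda>j. u (Suc j) - u j" "{1..k - 1}"] by simp
  also have "\<dots> \<le> real n * (\<Sum>j=1..n. (u (Suc j) - u j)\<^sup>2)"
    using assms by (subst mult.commute) (intro mult_mono sum_mono2 sum_nonneg, auto)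
  finally show ?thesis .
qed

lemma perturbed_Dirichlet_form_vanishing:
  fixes u s b :: "nat \<Rightarrow> real"
  assumes u1: "u 1 = 0"
    and s: "0 < s0" "\<forall>j\<in>{1..n}. s0 \<le> s j"
    and b: "\<forall>k\<in>{2..n}. \<bar>b k\<bar> \<le> B" "4 * B * real n ^ 2 \<le> s0"
    and form: "(\<Sum>j=1..n. s j * (u (Suc j) - u j)\<^sup>2) / 2 = (\<Sum>k=2..n. b k * (u k)\<^sup>2)"
    and k: "k \<in> {2..n}"
  shows "u k = 0"
proof -
  define D where "D = (\<Sum>j=1..n. (u (Suc j) - u j)\<^sup>2)"
  have D: "0 \<le> D" unfolding D_def by (intro sum_nonneg) auto
  have B: "0 \<le> B" using b(1) k by force
  have Poincare: "(u i)\<^sup>2 \<le> real n * D" if "i \<in> {2..n}" for i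
    unfolding D_def using discrete_Poincare[of u i n, OF u1] that by simp
  have "s0 * D \<le> (\<Sum>j=1..n. s j * (u (Suc j) - u j)\<^sup>2)"
    unfolding D_def sum_distrib_left using s by (intro sum_mono mult_right_mono) auto
  also have "\<dots> = 2 * (\<Sum>i=2..n. b i * (u i)\<^sup>2)"
    using form by simp
  also have "\<dots> \<le> 2 * (\<Sum>i=2..n. B * (real n * D))"
    using b(1) Poincare B
    by (intro mult_left_mono sum_mono order_trans[OF mult_right_mono mult_left_mono]) (auto dest: abs_le_D1)
  also have "\<dots> = 2 * (real (n - 1) * (B * (real n * D)))"
    by simp
  also have "\<dots> \<le> 2 * (real n * (B * (real n * D)))"
    using B D by (intro mult_left_mono mult_right_mono) auto
  also have "\<dots> = 2 * (B * real n ^ 2 * D)"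
    by (simp add: power2_eq_square)
  also have "\<dots> \<le> s0 * D / 2"
    using mult_right_mono[OF b(2) D] by (simp add: algebra_simps)
  finally have "D = 0" using s(1) D by (simp add: mult_le_0_iff)
  then show ?thesis using Poincare[OF k] by simp
qed

lemma Hessian_form_Lag:
  assumes n: "1 \<le> n" and u: "\<forall>m. m \<notin> {2..n} \<longrightarrow> u m = 0"
  shows "(\<Sum>i=2..n. u i * (\<Sum>k=2..n. pd i (pd k (Lag n c y)) phi * u k)) =
    (\<Sum>j=1..n. half_gap_sin n phi j * (u (Suc j) - u j)\<^sup>2) / 2
    - (\<Sum>k=2..n. multiplier_curvature c y phi k * (u k)\<^sup>2)"
proof -
  let ?s = "half_gap_sin n phi"
  have "(\<Sum>i=2..n. u i * (\<Sum>k=2..n. pd i (pd k (Lag n c y)) phi * u k))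
      = (\<Sum>k=2..n. u k * (\<Sum>i=2..n. u i * pd i (pd k (Lag n c y)) phi))"
    unfolding sum_distrib_left by (rule sum.swap[THEN trans]) (simp add: mult_ac)
  also have "\<dots> = (\<Sum>k=2..n. u k * (?s k * (u k - u (Suc k)) + ?s (k - 1) * (u k - u (k - 1))) / 2
      - multiplier_curvature c y phi k * (u k)\<^sup>2)"
    using u by (intro sum.cong refl) (simp add: sum_mult_pd_pd_Lag field_simps power2_eq_square)
  also have "\<dots> = (\<Sum>k=2..n. u k * (?s k * (u k - u (Suc k)) + ?s (k - 1) * (u k - u (k - 1)))) / 2
      - (\<Sum>k=2..n. multiplier_curvature c y phi k * (u k)\<^sup>2)"
    by (simp add: sum_subtractf sum_divide_distrib)
  also have "\<dots> = (\<Sum>j=1..n. ?s j * (u (Suc j) - u j)\<^sup>2) / 2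
      - (\<Sum>k=2..n. multiplier_curvature c y phi k * (u k)\<^sup>2)"
    using sum_by_parts_Dirichlet[of u n ?s] u n by simp
  finally show ?thesis .
qed

subsection \<open>The kernel of the KKT matrix\<close>

lemma invertible_mat_if_trivial_kernel:
  fixes A :: "real mat"
  assumes A: "A \<in> carrier_mat m m"
    and ker: "\<And>v. v \<in> carrier_vec m \<Longrightarrow> A *\<^sub>v v = 0\<^sub>v m \<Longrightarrow> v = 0\<^sub>v m"
  shows "invertible_mat A"
proof -
  have "det A \<noteq> 0" using ker unfolding det_0_iff_vec_prod_zero[OF A] by blast
  from det_non_zero_imp_unit[OF A this, of "()"]
  obtain B where B: "B \<in> carrier_mat m m" "B * A = 1\<^sub>m m" "A * B = 1\<^sub>m m"
    unfolding Units_def by (auto simp: ring_mat_simps)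
  show ?thesis unfolding invertible_mat_def inverts_mat_def using A B by (auto simp: square_mat.simps)
qed

lemma sum_lessThan_Suc_split:
  fixes n :: nat
  assumes "2 \<le> n"
  shows "(\<Sum>j<n + 1. F j) = (\<Sum>k=2..n. F (k - 2)) + F (n - 1) + (F n :: real)"
proof -
  have "(\<Sum>j<n + 1. F j) = F n + (F (n - 1) + (\<Sum>j<n - 1. F j))"
    using assms by (cases n) auto
  moreover have "(\<Sum>j<n - 1. F j) = (\<Sum>k=2..n. F (k - 2))"
    by (rule sum.reindex_bij_witness[where i="\<lambda>k. k - 2" and j="\<lambda>j. j + 2"]) (use assms in auto)
  ultimately show ?thesis by simp
qed

lemma KKT_index:
  assumes "2 \<le> n" "i \<in> {2..n}" "k \<in> {2..n}"
  shows "KKT n c phi y $$ (i - 2, k - 2) = pd i (pd k (Lag n c y)) phi"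
    and "KKT n c phi y $$ (i - 2, n - 1) = pd i (g1 n c) phi"
    and "KKT n c phi y $$ (i - 2, n) = pd i (g2 n c) phi"
    and "KKT n c phi y $$ (n - 1, i - 2) = pd i (g1 n c) phi"
    and "KKT n c phi y $$ (n, i - 2) = pd i (g2 n c) phi"
proof -
  have "i - 2 < n - 1" "k - 2 < n - 1" "Suc (Suc (i - 2)) = i" "Suc (Suc (k - 2)) = k"
    "n \<noteq> n - 1" "\<not> n < n - 1"
    using assms by auto
  then show "KKT n c phi y $$ (i - 2, k - 2) = pd i (pd k (Lag n c y)) phi"
    and "KKT n c phi y $$ (i - 2, n - 1) = pd i (g1 n c) phi"
    and "KKT n c phi y $$ (i - 2, n) = pd i (g2 n c) phi"
    and "KKT n c phi y $$ (n - 1, i - 2) = pd i (g1 n c) phi"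
    and "KKT n c phi y $$ (n, i - 2) = pd i (g2 n c) phi"
    by (simp_all add: KKT_def)
qed

lemma KKT_mult_vec_index:
  assumes n: "2 \<le> n" and v: "v \<in> carrier_vec (n + 1)" and r: "r < n + 1"
    and u: "u = (\<lambda>k. if k \<in> {2..n} then vec_index v (k - 2) else 0)"
  shows "vec_index (KKT n c phi y *\<^sub>v v) r = (\<Sum>k=2..n. KKT n c phi y $$ (r, k - 2) * u k)
    + KKT n c phi y $$ (r, n - 1) * vec_index v (n - 1) + KKT n c phi y $$ (r, n) * vec_index v n"
proof -
  let ?K = "KKT n c phi y"
  have dims: "dim_row ?K = n + 1" "dim_col ?K = n + 1" by (simp_all add: KKT_def)
  have "vec_index (?K *\<^sub>v v) r = (\<Sum>j<n + 1. ?K $$ (r, j) * vec_index v j)"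
    using r carrier_vecD[OF v] by (simp add: dims scalar_prod_def lessThan_atLeast0)
  also have "\<dots> = (\<Sum>k=2..n. ?K $$ (r, k - 2) * vec_index v (k - 2))
      + ?K $$ (r, n - 1) * vec_index v (n - 1) + ?K $$ (r, n) * vec_index v n"
    by (rule sum_lessThan_Suc_split[OF n])
  also have "(\<Sum>k=2..n. ?K $$ (r, k - 2) * vec_index v (k - 2)) = (\<Sum>k=2..n. ?K $$ (r, k - 2) * u k)"
    by (intro sum.cong) (auto simp: u)
  finally show ?thesis .
qed

lemma KKT_kernel_rows:
  assumes n: "2 \<le> n" and v: "v \<in> carrier_vec (n + 1)" "KKT n c phi y *\<^sub>v v = 0\<^sub>v (n + 1)"
    and u: "u = (\<lambda>k. if k \<in> {2..n} then vec_index v (k - 2) else 0)"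
  shows "\<And>i. i \<in> {2..n} \<Longrightarrow> (\<Sum>k=2..n. pd i (pd k (Lag n c y)) phi * u k)
      + pd i (g1 n c) phi * vec_index v (n - 1) + pd i (g2 n c) phi * vec_index v n = 0"
    and "(\<Sum>k=2..n. pd k (g1 n c) phi * u k) = 0"
    and "(\<Sum>k=2..n. pd k (g2 n c) phi * u k) = 0"
proof -
  let ?K = "KKT n c phi y"
  have row: "(\<Sum>k=2..n. ?K $$ (r, k - 2) * u k)
      + ?K $$ (r, n - 1) * vec_index v (n - 1) + ?K $$ (r, n) * vec_index v n = 0"
    if "r < n + 1" for r
    using KKT_mult_vec_index[OF n v(1) that u, where c = c and phi = phi and y = y] v(2) that by simp
  show "(\<Sum>k=2..n. pd i (pd k (Lag n c y)) phi * u k)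
      + pd i (g1 n c) phi * vec_index v (n - 1) + pd i (g2 n c) phi * vec_index v n = 0"
    if i: "i \<in> {2..n}" for i
  proof -
    have "(\<Sum>k=2..n. ?K $$ (i - 2, k - 2) * u k) = (\<Sum>k=2..n. pd i (pd k (Lag n c y)) phi * u k)"
      using KKT_index(1)[OF n i] by (intro sum.cong) auto
    moreover have "i - 2 < n + 1" using i by auto
    ultimately show ?thesis using row[of "i - 2"] KKT_index(2,3)[OF n i i] by simp
  qed
  show "(\<Sum>k=2..n. pd k (g1 n c) phi * u k) = 0"
  proof -
    have "(\<Sum>k=2..n. ?K $$ (n - 1, k - 2) * u k) = (\<Sum>k=2..n. pd k (g1 n c) phi * u k)"
      using KKT_index(4)[OF n] by (intro sum.cong) auto
    moreover have "?K $$ (n - 1, n - 1) = 0" "?K $$ (n - 1, n) = 0" "n - 1 < n + 1"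
      using n by (simp_all add: KKT_def)
    ultimately show ?thesis using row[of "n - 1"] by simp
  qed
  show "(\<Sum>k=2..n. pd k (g2 n c) phi * u k) = 0"
  proof -
    have "(\<Sum>k=2..n. ?K $$ (n, k - 2) * u k) = (\<Sum>k=2..n. pd k (g2 n c) phi * u k)"
      using KKT_index(5)[OF n] by (intro sum.cong) auto
    moreover have "?K $$ (n, n - 1) = 0" "?K $$ (n, n) = 0"
      using n by (simp_all add: KKT_def)
    ultimately show ?thesis using row[of n] by simp
  qed
qed

lemma KKT_kernel_variables_vanish:
  assumes n: "2 \<le> n" and v: "v \<in> carrier_vec (n + 1)" "KKT n c phi y *\<^sub>v v = 0\<^sub>v (n + 1)"
    and u: "u = (\<lambda>k. if k \<in> {2..n} then vec_index v (k - 2) else 0)"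
    and s: "0 < s0" "\<forall>j\<in>{1..n}. s0 \<le> half_gap_sin n phi j"
    and b: "\<forall>k\<in>{2..n}. \<bar>multiplier_curvature c y phi k\<bar> \<le> B" "4 * B * real n ^ 2 \<le> s0"
  shows "u k = 0"
proof -
  let ?l1 = "vec_index v (n - 1)" and ?l2 = "vec_index v n"
  note rows = KKT_kernel_rows[OF n v u]
  have u_out: "\<forall>m. m \<notin> {2..n} \<longrightarrow> u m = 0" by (simp add: u)
  have "(\<Sum>i=2..n. u i * (\<Sum>k=2..n. pd i (pd k (Lag n c y)) phi * u k))
      = (\<Sum>i=2..n. - ?l1 * (pd i (g1 n c) phi * u i) - ?l2 * (pd i (g2 n c) phi * u i))"
  proof (intro sum.cong refl)
    fix i assume i: "i \<in> {2..n}"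
    have row: "(\<Sum>k=2..n. pd i (pd k (Lag n c y)) phi * u k)
        = - pd i (g1 n c) phi * ?l1 - pd i (g2 n c) phi * ?l2"
      using rows(1)[OF i] by linarith
    show "u i * (\<Sum>k=2..n. pd i (pd k (Lag n c y)) phi * u k)
        = - ?l1 * (pd i (g1 n c) phi * u i) - ?l2 * (pd i (g2 n c) phi * u i)"
      by (simp only: row) (simp add: algebra_simps)
  qed
  also have "\<dots> = 0"
    using rows(2,3) by (simp add: sum_subtractf sum_negf flip: sum_distrib_left)
  finally have "(\<Sum>j=1..n. half_gap_sin n phi j * (u (Suc j) - u j)\<^sup>2) / 2
      = (\<Sum>k=2..n. multiplier_curvature c y phi k * (u k)\<^sup>2)"
    using Hessian_form_Lag[of n u c y phi] n u_out by simp
  then show "u k = 0"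
    using perturbed_Dirichlet_form_vanishing[OF _ s b] u_out by (cases "k \<in> {2..n}") auto
qed

lemma sin_cos_system_trivial:
  fixes l1 l2 a b :: real
  assumes a: "l1 * sin a = l2 * cos a" and b: "l1 * sin b = l2 * cos b" and ab: "sin (b - a) \<noteq> 0"
  shows "l1 = 0" and "l2 = 0"
proof -
  have "l1 * sin (b - a) = cos a * (l1 * sin b) - cos b * (l1 * sin a)"
    by (simp add: sin_diff algebra_simps)
  also have "\<dots> = cos a * (l2 * cos b) - cos b * (l2 * cos a)"
    by (simp only: a b)
  finally show "l1 = 0" using ab by simp
  have "l2 * sin (b - a) = sin b * (l2 * cos a) - sin a * (l2 * cos b)"
    by (simp add: sin_diff algebra_simps)
  also have "\<dots> = sin b * (l1 * sin a) - sin a * (l1 * sin b)"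
    by (simp only: a b)
  finally show "l2 = 0" using ab by simp
qed

lemma KKT_invertible:
  assumes pq: "2 \<le> p" "p < q" "q \<le> n" "jump c p \<noteq> 0" "jump c q \<noteq> 0"
    and sin_pq: "sin (phi q - phi p) \<noteq> 0"
    and s: "0 < s0" "\<forall>j\<in>{1..n}. s0 \<le> half_gap_sin n phi j"
    and b: "\<forall>k\<in>{2..n}. \<bar>multiplier_curvature c y phi k\<bar> \<le> B" "4 * B * real n ^ 2 \<le> s0"
  shows "invertible_mat (KKT n c phi y)"
proof (rule invertible_mat_if_trivial_kernel)
  show "KKT n c phi y \<in> carrier_mat (n + 1) (n + 1)" by (simp add: KKT_def)
next
  fix v assume v: "v \<in> carrier_vec (n + 1)" "KKT n c phi y *\<^sub>v v = 0\<^sub>v (n + 1)"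
  have n: "2 \<le> n" using pq by simp
  define u where "u = (\<lambda>k. if k \<in> {2..n} then vec_index v (k - 2) else 0)"
  let ?l1 = "vec_index v (n - 1)" and ?l2 = "vec_index v n"
  have u0: "u k = 0" for k
    using KKT_kernel_variables_vanish[OF n v u_def s b] .
  have "?l1 * sin (phi i) = ?l2 * cos (phi i)" if "i \<in> {p, q}" for i
  proof -
    have "i \<in> {2..n}" "jump c i \<noteq> 0" using that pq by auto
    moreover from this(1) have "pd i (g1 n c) phi * ?l1 + pd i (g2 n c) phi * ?l2 = 0"
      using KKT_kernel_rows(1)[OF n v u_def] u0 by simp
    ultimately show ?thesis by (simp add: pd_g1 pd_g2 algebra_simps)
  qed
  then have l: "?l1 = 0" "?l2 = 0"
    using sin_cos_system_trivial[OF _ _ sin_pq] by blast+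
  have v_u: "vec_index v i = u (i + 2)" if "i < n - 1" for i
    using that by (simp add: u_def)
  show "v = 0\<^sub>v (n + 1)"
  proof (rule eq_vecI)
    fix i assume "i < dim_vec (0\<^sub>v (n + 1) :: real vec)"
    then have "i < n - 1 \<or> i = n - 1 \<or> i = n" by auto
    then show "vec_index v i = vec_index (0\<^sub>v (n + 1)) i"
      using v_u u0 l n by auto
  qed (use v in simp)
qed

subsection \<open>Sign changes\<close>

lemma eq_if_no_jump:
  fixes c :: "nat \<Rightarrow> real"
  assumes "\<forall>m. a < m \<longrightarrow> m \<le> b \<longrightarrow> c (m - 1) = c m" "a \<le> j" "j \<le> b"
  shows "c j = c a"
  using assms(2,3)
proof (induction j rule: dec_induct)
  case base
  then show ?case by simp
next
  case (step j)
  then show ?case using assms(1)[rule_format, of "Suc j"] by simp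
qed

lemma long_run_if_single_sign_change:
  fixes c :: "nat \<Rightarrow> real"
  assumes m: "2 \<le> m" "m \<le> Suc n"
    and lo: "\<forall>j\<in>{1..<m}. c j = c 1" and hi: "\<forall>j\<in>{m..n}. c j = - c 1"
  shows "\<not> no_long_run n c"
proof -
  have run: "cycseq n c ((m - 1 + t) mod (2 * n)) = - c 1" if t: "t < n" for t
  proof (cases "m - 1 + t < n")
    case True
    then have "m - 1 + t + 1 \<in> {m..n}" using m by auto
    with hi have "c (m - 1 + t + 1) = - c 1" by blast
    then show ?thesis using True t m by (simp add: cycseq_def)
  next
    case False
    then have "m - 1 + t - n + 1 \<in> {1..<m}" using t m by auto
    with lo have "c (m - 1 + t - n + 1) = c 1" by blast
    then show ?thesis using False t m by (simp add: cycseq_def)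
  qed
  have "\<forall>t < n - 1. cycseq n c ((m - 1 + t) mod (2 * n)) = cycseq n c (m - 1)"
    using run[of 0] run m by auto
  moreover have "m - 1 < 2 * n" using m by simp
  ultimately show ?thesis unfolding no_long_run_def by blast
qed

lemma signs_of_single_sign_change:
  fixes c :: "nat \<Rightarrow> real"
  assumes pm: "\<forall>j\<in>{1..n}. c j = 1 \<or> c j = -1"
    and m: "2 \<le> m" "m \<le> Suc n" "m \<le> n \<longrightarrow> c (m - 1) \<noteq> c m"
    and other: "\<forall>k. 2 \<le> k \<longrightarrow> k \<le> n \<longrightarrow> k \<noteq> m \<longrightarrow> c (k - 1) = c k"
  shows "\<forall>j\<in>{1..<m}. c j = c 1" and "\<forall>j\<in>{m..n}. c j = - c 1"
proof -
  have lo_run: "\<forall>k. 1 < k \<longrightarrow> k \<le> m - 1 \<longrightarrow> c (k - 1) = c k" using other m by auto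
  show lo: "\<forall>j\<in>{1..<m}. c j = c 1"
  proof
    fix j assume "j \<in> {1..<m}"
    then show "c j = c 1" by (intro eq_if_no_jump[OF lo_run]) auto
  qed
  have hi_run: "\<forall>k. m < k \<longrightarrow> k \<le> n \<longrightarrow> c (k - 1) = c k" using other m by auto
  have flip: "c m = - c 1" if "m \<le> n"
  proof -
    have "m - 1 \<in> {1..<m}" using m by auto
    with lo have "c (m - 1) = c 1" by blast
    moreover have "c (m - 1) \<noteq> c m" using m that by blast
    moreover have "c m = 1 \<or> c m = -1" "c 1 = 1 \<or> c 1 = -1" using pm m that by auto
    ultimately show ?thesis by auto
  qed
  show "\<forall>j\<in>{m..n}. c j = - c 1"
  proof
    fix j assume j: "j \<in> {m..n}"
    then have "c j = c m" by (intro eq_if_no_jump[OF hi_run]) auto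
    then show "c j = - c 1" using flip j by simp
  qed
qed

lemma two_sign_changes:
  fixes c :: "nat \<Rightarrow> real"
  assumes n: "1 \<le> n" and pm: "\<forall>j\<in>{1..n}. c j = 1 \<or> c j = -1" and run: "no_long_run n c"
  shows "\<exists>p q. 2 \<le> p \<and> p < q \<and> q \<le> n \<and> c (p - 1) \<noteq> c p \<and> c (q - 1) \<noteq> c q"
proof (rule ccontr)
  assume "\<not> ?thesis"
  then have none: "c (q - 1) = c q" if "2 \<le> p" "p < q" "q \<le> n" "c (p - 1) \<noteq> c p" for p q
    using that by blast
  obtain m where m: "2 \<le> m" "m \<le> Suc n" "m \<le> n \<longrightarrow> c (m - 1) \<noteq> c m"
    and other: "\<forall>k. 2 \<le> k \<longrightarrow> k \<le> n \<longrightarrow> k \<noteq> m \<longrightarrow> c (k - 1) = c k"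
  proof (cases "\<exists>m. 2 \<le> m \<and> m \<le> n \<and> c (m - 1) \<noteq> c m")
    case True
    then obtain m where m: "2 \<le> m" "m \<le> n" "c (m - 1) \<noteq> c m" by blast
    have "c (k - 1) = c k" if k: "2 \<le> k" "k \<le> n" "k \<noteq> m" for k
    proof (cases "k < m")
      case True
      then show ?thesis using none[of k m] k m by (cases "c (k - 1) = c k") auto
    next
      case False
      then show ?thesis using none[of m k] k m by simp
    qed
    with m show ?thesis by (intro that[of m]) auto
  next
    case False
    with n show ?thesis by (intro that[of "Suc n"]) auto
  qed
  with pm have "\<forall>j\<in>{1..<m}. c j = c 1" "\<forall>j\<in>{m..n}. c j = - c 1"
    using signs_of_single_sign_change by blast+
  with m run show False using long_run_if_single_sign_change by blast
qed

subsection \<open>Estimates near \<open>w\<^sup>*\<close>\<close>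

lemma phistar_diff: "0 < n \<Longrightarrow> phistar n b - phistar n a = (real b - real a) * (pi / real n)"
  unfolding phistar_def by (simp add: field_simps)

lemma ang_near_phistar:
  assumes n: "0 < n" and phi: "\<forall>j\<in>{2..n}. \<bar>phi j - phistar n j\<bar> < e" and e: "0 < e"
    and j: "1 \<le> j" "j \<le> Suc n"
  shows "\<bar>ang n phi j - phistar n j\<bar> < e"
proof -
  consider "j = 1" | "j = Suc n" | "j \<in> {2..n}" using j by fastforce
  then show ?thesis
  proof cases
    case 1
    then show ?thesis using e by (simp add: ang_def phistar_def)
  next
    case 2
    then show ?thesis using e n by (simp add: ang_def phistar_def)
  next
    case 3
    then show ?thesis using phi by (simp add: ang_def)
  qed
qed

lemma half_gap_sin_ge:
  assumes n: "2 \<le> n" and phi: "\<forall>j\<in>{2..n}. \<bar>phi j - phistar n j\<bar> < e"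
    and e: "0 < e" "e \<le> pi / (4 * real n)"
  shows "\<forall>j\<in>{1..n}. sin (pi / (4 * real n)) \<le> half_gap_sin n phi j"
proof
  fix j assume j: "j \<in> {1..n}"
  let ?w = "pi / real n" and ?d = "(ang n phi (Suc j) - ang n phi j) / 2"
  have "\<bar>ang n phi (Suc j) - phistar n (Suc j)\<bar> < e" "\<bar>ang n phi j - phistar n j\<bar> < e"
    using ang_near_phistar[OF _ phi e(1)] n j by auto
  moreover have "phistar n (Suc j) - phistar n j = ?w" using phistar_diff[of n] n by simp
  moreover have "pi / (4 * real n) = ?w / 4" by simp
  moreover have "?w \<le> pi / 2" using n by (simp add: field_simps)
  ultimately have "pi / (4 * real n) \<le> ?d" "?d \<le> pi / 2"
    using e by (auto simp: abs_less_iff)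
  moreover have "0 < ?w" using n by simp
  ultimately show "sin (pi / (4 * real n)) \<le> half_gap_sin n phi j"
    unfolding half_gap_sin_def by (intro sin_monotone_2pi_le) auto
qed

lemma sin_gap_pos:
  assumes phi: "\<forall>j\<in>{2..n}. \<bar>phi j - phistar n j\<bar> < e" and e: "e \<le> pi / (4 * real n)"
    and pq: "2 \<le> p" "p < q" "q \<le> n"
  shows "0 < sin (phi q - phi p)"
proof -
  let ?w = "pi / real n"
  have "\<bar>phi q - phistar n q\<bar> < e" "\<bar>phi p - phistar n p\<bar> < e" using phi pq by auto
  moreover have "phistar n q - phistar n p = (real q - real p) * ?w" using phistar_diff pq by simp
  moreover have "1 * ?w \<le> (real q - real p) * ?w"
    by (rule mult_right_mono) (use pq in auto)
  moreover have "(real q - real p) * ?w \<le> (real n - 2) * ?w"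
    by (rule mult_right_mono) (use pq in auto)
  moreover have "(real n - 2) * ?w = pi - 2 * ?w" using pq by (simp add: field_simps)
  moreover have "pi / (4 * real n) = ?w / 4" "0 < ?w" using pq by auto
  ultimately have "0 < phi q - phi p" "phi q - phi p < pi"
    using e by (auto simp: abs_less_iff)
  then show ?thesis by (rule sin_gt_zero)
qed

lemma multiplier_curvature_bound:
  assumes pm: "\<forall>j\<in>{1..n}. c j = 1 \<or> c j = -1" and y: "\<bar>fst y\<bar> \<le> r" "\<bar>snd y\<bar> \<le> r"
  shows "\<forall>k\<in>{2..n}. \<bar>multiplier_curvature c y phi k\<bar> \<le> 4 * r"
proof
  fix k assume k: "k \<in> {2..n}"
  have "k - 1 \<in> {1..n}" "k \<in> {1..n}" using k by auto
  then have "c (k - 1) = 1 \<or> c (k - 1) = -1" "c k = 1 \<or> c k = -1" using pm by blast+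
  then have "\<bar>jump c k\<bar> \<le> 2" by (auto simp: jump_def)
  moreover have "\<bar>fst y * cos (phi k)\<bar> \<le> \<bar>fst y\<bar>" "\<bar>snd y * sin (phi k)\<bar> \<le> \<bar>snd y\<bar>"
    by (simp_all add: abs_mult mult_left_le)
  then have "\<bar>fst y * cos (phi k) + snd y * sin (phi k)\<bar> \<le> r + r"
    using y by (intro order_trans[OF abs_triangle_ineq add_mono]) auto
  ultimately have "\<bar>jump c k\<bar> * \<bar>fst y * cos (phi k) + snd y * sin (phi k)\<bar> \<le> 2 * (r + r)"
    by (intro mult_mono) auto
  then show "\<bar>multiplier_curvature c y phi k\<bar> \<le> 4 * r"
    unfolding multiplier_curvature_def abs_mult by simp
qed

theorem lemma4:
  fixes n :: nat and c :: "nat \<Rightarrow> real"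
  assumes "n \<ge> 3"
    and "\<forall>j\<in>{1..n}. c j = 1 \<or> c j = -1"
    and "no_long_run n c"
  shows "\<exists>e>0. \<forall>phi y. (\<forall>j\<in>{2..n}. \<bar>phi j - phistar n j\<bar> < e)
           \<and> \<bar>fst y\<bar> < e \<and> \<bar>snd y\<bar> < e
           \<longrightarrow> invertible_mat (KKT n c phi y)"
proof -
  obtain p q where pq: "2 \<le> p" "p < q" "q \<le> n" "c (p - 1) \<noteq> c p" "c (q - 1) \<noteq> c q"
    using two_sign_changes[OF _ assms(2,3)] assms(1) by auto
  define s0 where "s0 = sin (pi / (4 * real n))"
  define e where "e = min (pi / (4 * real n)) (s0 / (16 * real n ^ 2))"
  have "0 < s0"
    unfolding s0_def using assms(1) by (intro sin_gt_zero) (auto simp: field_simps)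
  then have "0 < e" using assms(1) by (simp add: e_def)
  have "e \<le> s0 / (16 * real n ^ 2)" by (simp add: e_def)
  then have e_le: "e \<le> pi / (4 * real n)" "4 * (4 * e) * real n ^ 2 \<le> s0"
    using assms(1) by (simp add: e_def, simp add: field_simps)
  have "invertible_mat (KKT n c phi y)"
    if phi: "\<forall>j\<in>{2..n}. \<bar>phi j - phistar n j\<bar> < e" and y: "\<bar>fst y\<bar> < e" "\<bar>snd y\<bar> < e" for phi y
  proof (rule KKT_invertible[OF pq(1-3)])
    show "jump c p \<noteq> 0" "jump c q \<noteq> 0" using pq by (auto simp: jump_def)
    show "sin (phi q - phi p) \<noteq> 0" using sin_gap_pos[OF phi e_le(1) pq(1-3)] by simp
    show "0 < s0" by fact
    show "\<forall>j\<in>{1..n}. s0 \<le> half_gap_sin n phi j"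
      unfolding s0_def using half_gap_sin_ge[OF _ phi \<open>0 < e\<close> e_le(1)] assms(1) by simp
    show "\<forall>k\<in>{2..n}. \<bar>multiplier_curvature c y phi k\<bar> \<le> 4 * e"
      using multiplier_curvature_bound[OF assms(2)] y by (simp add: less_imp_le)
    show "4 * (4 * e) * real n ^ 2 \<le> s0" by (fact e_le(2))
  qed
  with \<open>0 < e\<close> show ?thesis by blast
qed

end
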